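(* Let $\alpha$ be a graph function on a strongly connected digraph $G$ and $v$ a vertex with $\rho^R_v>0$. Then there exist edges $(u,v)$ and $(v,w)$ of $G$ such that $y_v+\frac{\rho^R_v}{2}\le\frac{y_u+y_w}{2}$.
   Context: $G$ is a strongly connected directed graph (self-loops allowed); a graph function assigns a real weight $\alpha_{uv}$ to each edge. $\alpha_v^{\text{in}}=\max_{u:(u,v)\in G}\alpha_{uv}$, $\alpha_v^{\text{out}}=\max_{w:(v,w)\in G}\alpha_{vw}$, $\rho^R_v=\max\{0,\alpha_v^{\text{out}}-\alpha_v^{\text{in}}\}$. A raising operation at $v$: if $\rho^R_v>0$ add $\rho^R_v/2$ to each incoming edge weight $\alpha_{uv}$ ($u\ne v$) and subtract it from each outgoing $\alpha_{vw}$ ($w\neq v$); otherwise do nothing. Starting from $\alpha$, for any infinite sequence of raising operations in which every vertex occurs infinitely often, the cumulative amount $r_v(t)$ by which each vertex has been raised converges to a limit vector $r^*$ independent of the sequence. The heights are $y_v=-r^*_v$. *)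

theory Defs
  imports Complex_Main
begin

text \<open>A digraph is given by a vertex set V and an edge set E \<subseteq> V \<times> V (self-loops allowed).
A graph function is a weight function on pairs; only values on E matter.\<close>

definition strongly_connected :: "'a set \<Rightarrow> ('a \<times> 'a) set \<Rightarrow> bool" where
  "strongly_connected V E \<longleftrightarrow> V \<noteq> {} \<and> (\<forall>u\<in>V. \<forall>v\<in>V. (u, v) \<in> E\<^sup>+)"

definition alpha_in :: "('a \<times> 'a) set \<Rightarrow> ('a \<times> 'a \<Rightarrow> real) \<Rightarrow> 'a \<Rightarrow> real" where
  "alpha_in E \<alpha> v = Max {\<alpha> (u, v) | u. (u, v) \<in> E}"

definition alpha_out :: "('a \<times> 'a) set \<Rightarrow> ('a \<times> 'a \<Rightarrow> real) \<Rightarrow> 'a \<Rightarrow> real" where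
  "alpha_out E \<alpha> v = Max {\<alpha> (v, w) | w. (v, w) \<in> E}"

definition rhoR :: "('a \<times> 'a) set \<Rightarrow> ('a \<times> 'a \<Rightarrow> real) \<Rightarrow> 'a \<Rightarrow> real" where
  "rhoR E \<alpha> v = max 0 (alpha_out E \<alpha> v - alpha_in E \<alpha> v)"

definition raise_op :: "('a \<times> 'a) set \<Rightarrow> ('a \<times> 'a \<Rightarrow> real) \<Rightarrow> 'a \<Rightarrow> ('a \<times> 'a \<Rightarrow> real)" where
  "raise_op E \<alpha> v =
     (if rhoR E \<alpha> v > 0 then
        (\<lambda>(a, b). \<alpha> (a, b)
            + (if b = v \<and> a \<noteq> v then rhoR E \<alpha> v / 2 else 0)
            - (if a = v \<and> b \<noteq> v then rhoR E \<alpha> v / 2 else 0))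
      else \<alpha>)"

primrec run :: "('a \<times> 'a) set \<Rightarrow> ('a \<times> 'a \<Rightarrow> real) \<Rightarrow> (nat \<Rightarrow> 'a) \<Rightarrow> nat \<Rightarrow> ('a \<times> 'a \<Rightarrow> real)" where
  "run E \<alpha> s 0 = \<alpha>"
| "run E \<alpha> s (Suc t) = raise_op E (run E \<alpha> s t) (s t)"

primrec raised :: "('a \<times> 'a) set \<Rightarrow> ('a \<times> 'a \<Rightarrow> real) \<Rightarrow> (nat \<Rightarrow> 'a) \<Rightarrow> nat \<Rightarrow> 'a \<Rightarrow> real" where
  "raised E \<alpha> s 0 = (\<lambda>v. 0)"
| "raised E \<alpha> s (Suc t) =
     (\<lambda>v. raised E \<alpha> s t v + (if v = s t then rhoR E (run E \<alpha> s t) v / 2 else 0))"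

definition fair_seq :: "'a set \<Rightarrow> (nat \<Rightarrow> 'a) \<Rightarrow> bool" where
  "fair_seq V s \<longleftrightarrow> (\<forall>t. s t \<in> V) \<and> (\<forall>v\<in>V. \<forall>n. \<exists>t\<ge>n. s t = v)"

end

theory Submission
  imports Defs
begin

text \<open>The raising operations only ever shift the graph function by a potential: after \<open>t\<close> steps
edge \<open>(a, b)\<close> carries \<open>\<alpha>(a, b) + r\<^sub>b(t) - r\<^sub>a(t)\<close>. Since \<open>r(t)\<close> converges, so does the graph
function, and every raising at \<open>v\<close> increases \<open>r\<^sub>v\<close> by half the current \<open>\<rho>\<^sup>R\<^sub>v\<close>; as \<open>v\<close> is
raised infinitely often, the limit graph function has \<open>\<rho>\<^sup>R\<^sub>v = 0\<close>. Comparing the maximal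
outgoing edge of \<open>\<alpha>\<close> and the maximal incoming edge of the limit yields the inequality.\<close>

definition reweight :: "('a \<times> 'a \<Rightarrow> real) \<Rightarrow> ('a \<Rightarrow> real) \<Rightarrow> 'a \<times> 'a \<Rightarrow> real" where
  "reweight \<alpha> r = (\<lambda>(a, b). \<alpha> (a, b) + r b - r a)"

lemma rhoR_nonneg: "0 \<le> rhoR E \<alpha> v"
  by (simp add: rhoR_def)

lemma run_eq_reweight_raised: "run E \<alpha> s t = reweight \<alpha> (raised E \<alpha> s t)"
proof (induction t)
  case 0
  show ?case by (simp add: reweight_def)
next
  case (Suc t)
  have "rhoR E (run E \<alpha> s t) (s t) = 0" if "\<not> rhoR E (run E \<alpha> s t) (s t) > 0"
    using that rhoR_nonneg[of E "run E \<alpha> s t" "s t"] by linarith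
  then show ?case
    using Suc.IH by (auto simp: raise_op_def reweight_def)
qed

lemma tendsto_Max_image:
  fixes f :: "'b \<Rightarrow> 'a \<Rightarrow> 'c::linorder_topology"
  assumes "finite S" "S \<noteq> {}" "\<forall>x\<in>S. ((\<lambda>t. f t x) \<longlongrightarrow> g x) F"
  shows "((\<lambda>t. Max (f t ` S)) \<longlongrightarrow> Max (g ` S)) F"
  using assms
proof (induction S rule: finite_ne_induct)
  case (singleton x)
  then show ?case by simp
next
  case (insert x S)
  then show ?case by (simp add: tendsto_max)
qed

lemma finite_in_neighbours: "finite E \<Longrightarrow> finite {u. (u, v) \<in> E}"
  by (rule finite_subset[of _ "fst ` E"]) force+

lemma finite_out_neighbours: "finite E \<Longrightarrow> finite {w. (v, w) \<in> E}"
  by (rule finite_subset[of _ "snd ` E"]) force+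

lemma alpha_in_eq_Max_image: "alpha_in E \<alpha> v = Max ((\<lambda>u. \<alpha> (u, v)) ` {u. (u, v) \<in> E})"
  unfolding alpha_in_def by (rule arg_cong[where f = Max]) blast

lemma alpha_out_eq_Max_image: "alpha_out E \<alpha> v = Max ((\<lambda>w. \<alpha> (v, w)) ` {w. (v, w) \<in> E})"
  unfolding alpha_out_def by (rule arg_cong[where f = Max]) blast

lemma alpha_in_attained:
  assumes "finite E" "(u, v) \<in> E"
  shows "\<exists>u'. (u', v) \<in> E \<and> alpha_in E \<alpha> v = \<alpha> (u', v)"
proof -
  have "alpha_in E \<alpha> v \<in> (\<lambda>u. \<alpha> (u, v)) ` {u. (u, v) \<in> E}"
    unfolding alpha_in_eq_Max_image using assms
    by (intro Max_in finite_imageI finite_in_neighbours) auto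
  then show ?thesis by auto
qed

lemma alpha_out_attained:
  assumes "finite E" "(v, w) \<in> E"
  shows "\<exists>w'. (v, w') \<in> E \<and> alpha_out E \<alpha> v = \<alpha> (v, w')"
proof -
  have "alpha_out E \<alpha> v \<in> (\<lambda>w. \<alpha> (v, w)) ` {w. (v, w) \<in> E}"
    unfolding alpha_out_eq_Max_image using assms
    by (intro Max_in finite_imageI finite_out_neighbours) auto
  then show ?thesis by auto
qed

lemma alpha_in_ge: "finite E \<Longrightarrow> (u, v) \<in> E \<Longrightarrow> \<alpha> (u, v) \<le> alpha_in E \<alpha> v"
  unfolding alpha_in_eq_Max_image by (intro Max_ge finite_imageI finite_in_neighbours) auto

lemma alpha_out_ge: "finite E \<Longrightarrow> (v, w) \<in> E \<Longrightarrow> \<alpha> (v, w) \<le> alpha_out E \<alpha> v"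
  unfolding alpha_out_eq_Max_image by (intro Max_ge finite_imageI finite_out_neighbours) auto

lemma tendsto_rhoR:
  assumes "finite E" "(u, v) \<in> E" "(v, w) \<in> E"
    and "\<forall>e\<in>E. ((\<lambda>t. f t e) \<longlongrightarrow> g e) F"
  shows "((\<lambda>t. rhoR E (f t) v) \<longlongrightarrow> rhoR E g v) F"
proof -
  have "((\<lambda>t. alpha_in E (f t) v) \<longlongrightarrow> alpha_in E g v) F"
    unfolding alpha_in_eq_Max_image using assms
    by (intro tendsto_Max_image finite_in_neighbours) auto
  moreover have "((\<lambda>t. alpha_out E (f t) v) \<longlongrightarrow> alpha_out E g v) F"
    unfolding alpha_out_eq_Max_image using assms
    by (intro tendsto_Max_image finite_out_neighbours) auto
  ultimately show ?thesis
    unfolding rhoR_def by (intro tendsto_intros)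
qed

lemma rhoR_reweight_limit_eq_0:
  assumes "finite E" "E \<subseteq> V \<times> V" "fair_seq V s"
    and lim: "\<forall>x\<in>V. (\<lambda>t. raised E \<alpha> s t x) \<longlonglongrightarrow> r x"
    and "(u, v) \<in> E" "(v, w) \<in> E"
  shows "rhoR E (reweight \<alpha> r) v = 0"
proof (rule ccontr)
  define \<rho> where "\<rho> = rhoR E (reweight \<alpha> r) v"
  assume "rhoR E (reweight \<alpha> r) v \<noteq> 0"
  then have "\<rho> > 0"
    using rhoR_nonneg[of E "reweight \<alpha> r" v] unfolding \<rho>_def by linarith
  have "\<forall>e\<in>E. (\<lambda>t. run E \<alpha> s t e) \<longlonglongrightarrow> reweight \<alpha> r e"
    using assms(2) lim
    by (fastforce simp: run_eq_reweight_raised reweight_def intro!: tendsto_intros)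
  then have "(\<lambda>t. rhoR E (run E \<alpha> s t) v) \<longlonglongrightarrow> \<rho>"
    unfolding \<rho>_def using assms by (intro tendsto_rhoR)
  then have large: "eventually (\<lambda>t. \<rho> / 2 < rhoR E (run E \<alpha> s t) v) sequentially"
    using \<open>\<rho> > 0\<close> by (intro order_tendstoD(1)) auto
  have "v \<in> V" using assms(2,5) by auto
  then have "(\<lambda>t. raised E \<alpha> s t v) \<longlonglongrightarrow> r v" using lim by blast
  then have "(\<lambda>t. raised E \<alpha> s (Suc t) v - raised E \<alpha> s t v) \<longlonglongrightarrow> r v - r v"
    by (intro tendsto_diff LIMSEQ_Suc)
  then have small: "eventually (\<lambda>t. raised E \<alpha> s (Suc t) v - raised E \<alpha> s t v < \<rho> / 4) sequentially"
    using \<open>\<rho> > 0\<close> by (intro order_tendstoD(2)) auto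
  obtain N where N: "\<And>t. t \<ge> N \<Longrightarrow> \<rho> / 2 < rhoR E (run E \<alpha> s t) v
      \<and> raised E \<alpha> s (Suc t) v - raised E \<alpha> s t v < \<rho> / 4"
    using eventually_conj[OF large small] unfolding eventually_sequentially by blast
  obtain t where "t \<ge> N" "s t = v"
    using assms(3) \<open>v \<in> V\<close> unfolding fair_seq_def by blast
  then show False using N[of t] by (simp, linarith)
qed

lemma alpha_out_minus_in_le_of_reweight:
  assumes "finite E" "(u, v) \<in> E" "(v, w) \<in> E"
    and "rhoR E (reweight \<alpha> r) v = 0"
  shows "\<exists>u' w'. (u', v) \<in> E \<and> (v, w') \<in> E \<and>
           alpha_out E \<alpha> v - alpha_in E \<alpha> v \<le> 2 * r v - r u' - r w'"
proof -
  obtain w' where w': "(v, w') \<in> E" "alpha_out E \<alpha> v = \<alpha> (v, w')"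
    using alpha_out_attained[OF assms(1,3)] by blast
  obtain u' where u': "(u', v) \<in> E" "alpha_in E (reweight \<alpha> r) v = reweight \<alpha> r (u', v)"
    using alpha_in_attained[OF assms(1,2)] by blast
  have "reweight \<alpha> r (v, w') \<le> alpha_out E (reweight \<alpha> r) v"
    using assms(1) w'(1) by (rule alpha_out_ge)
  also have "\<dots> \<le> alpha_in E (reweight \<alpha> r) v"
    using assms(4) unfolding rhoR_def by linarith
  also have "\<dots> = \<alpha> (u', v) + r v - r u'"
    using u'(2) by (simp add: reweight_def)
  also have "\<dots> \<le> alpha_in E \<alpha> v + r v - r u'"
    using alpha_in_ge[OF assms(1) u'(1), of \<alpha>] by linarith
  finally have "alpha_out E \<alpha> v - alpha_in E \<alpha> v \<le> 2 * r v - r u' - r w'"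
    using w'(2) by (simp add: reweight_def)
  then show ?thesis
    using u'(1) w'(1) by blast
qed

lemma strongly_connected_in_out_edge:
  assumes "strongly_connected V E" "v \<in> V"
  obtains u w where "(u, v) \<in> E" "(v, w) \<in> E"
proof -
  have "(v, v) \<in> E\<^sup>+" using assms unfolding strongly_connected_def by blast
  then obtain u w where "(u, v) \<in> E" "(v, w) \<in> E"
    by (meson tranclE converse_tranclE)
  then show ?thesis by (rule that)
qed

theorem lemma4:
  fixes V :: "'a set" and E :: "('a \<times> 'a) set" and \<alpha> :: "'a \<times> 'a \<Rightarrow> real"
    and s :: "nat \<Rightarrow> 'a" and rstar :: "'a \<Rightarrow> real" and v :: 'a
  assumes "finite V" and "E \<subseteq> V \<times> V" and "strongly_connected V E"
    and "fair_seq V s"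
    and "\<forall>x\<in>V. (\<lambda>t. raised E \<alpha> s t x) \<longlonglongrightarrow> rstar x"
    and "v \<in> V" and "rhoR E \<alpha> v > 0"
  shows "\<exists>u w. (u, v) \<in> E \<and> (v, w) \<in> E \<and>
           (- rstar v) + rhoR E \<alpha> v / 2 \<le> ((- rstar u) + (- rstar w)) / 2"
proof -
  have "finite E"
    using assms(1) by (intro finite_subset[OF assms(2)]) simp
  obtain u w where "(u, v) \<in> E" "(v, w) \<in> E"
    using strongly_connected_in_out_edge[OF assms(3,6)] .
  with \<open>finite E\<close> have "rhoR E (reweight \<alpha> rstar) v = 0"
    by (rule rhoR_reweight_limit_eq_0[OF _ assms(2,4,5)])
  then obtain u' w' where "(u', v) \<in> E" "(v, w') \<in> E"
      and "alpha_out E \<alpha> v - alpha_in E \<alpha> v \<le> 2 * rstar v - rstar u' - rstar w'"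
    using alpha_out_minus_in_le_of_reweight[OF \<open>finite E\<close> \<open>(u, v) \<in> E\<close> \<open>(v, w) \<in> E\<close>]
    by blast
  moreover have "rhoR E \<alpha> v = alpha_out E \<alpha> v - alpha_in E \<alpha> v"
    using assms(7) unfolding rhoR_def by linarith
  ultimately have "- rstar v + rhoR E \<alpha> v / 2 \<le> (- rstar u' + - rstar w') / 2"
    by (simp add: field_simps)
  with \<open>(u', v) \<in> E\<close> \<open>(v, w') \<in> E\<close> show ?thesis by blast
qed

end
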